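(* For every $k\ge1$ and every $\ell\in\{1,\dots,12\}$, the string $t_\ell(k)$ is a Nyldon word.
   Context: Strings are over the binary alphabet $\{a,b\}$ ordered by $a \prec b$, and $\prec$ also denotes the induced lexicographic order on strings: $x \prec y$ iff $x$ is a proper prefix of $y$, or there is $i$ with $x[1..i-1]=y[1..i-1]$ and $x[i]\prec y[i]$; $x\preceq y$ means $x\prec y$ or $x=y$. Nyldon words are defined recursively: every string of length $1$ is a Nyldon word; a string $w$ with $|w|\ge 2$ is a Nyldon word iff there is no factorization $w=\gamma_1\cdots\gamma_m$ with $m\ge 2$, each $\gamma_i$ a nonempty Nyldon word, and $\gamma_1\preceq\gamma_2\preceq\cdots\preceq\gamma_m$. For a binary string $w$, $\overline{w}$ is obtained by exchanging $a$ and $b$ letterwise, and $w'$ is $w$ with its last letter removed; $\overline{w}'$ means $(\overline{w})'$. Thue–Morse words: $\mathit{TM}_0=a$ and $\mathit{TM}_k=\mathit{TM}_{k-1}\cdot\overline{\mathit{TM}_{k-1}}$ for $k\ge1$. For $k\ge1$ put $A=\mathit{TM}_{2k}$, $B=\overline{\mathit{TM}_{2k}}$ and define $t_1(k)=b\,A\,B'$, $t_2(k)=b\,A\,B$, $t_3(k)=b\,A\,B\,B'$, $t_4(k)=b\,A$, $t_5(k)=b\,A\,\mathit{TM}_{2k-1}\,\overline{\mathit{TM}_{2k-2}}'$, $t_6(k)=b\,A\,A\,B'$, $t_7(k)=b\,A\,A\,B$, $t_8(k)=b\,A\,A\,B\,B'$, $t_9(k)=b\,A\,B\,A\,A\,B'$,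 $t_{10}(k)=b\,A\,B\,A\,A\,B$, $t_{11}(k)=b\,A\,A\,B\,B\,A\,A\,B'$, $t_{12}(k)=b\,A\,B\,A\,A\,B\,B\,A\,A\,B'$. *)

theory Defs imports Main begin

datatype letter = La | Lb   (* the letters a and b, with a \<prec> b *)

type_synonym word = "letter list"

fun lex_less :: "word \<Rightarrow> word \<Rightarrow> bool" where
  "lex_less [] [] = False"
| "lex_less [] (y # ys) = True"
| "lex_less (x # xs) [] = False"
| "lex_less (x # xs) (y # ys) = ((x = La \<and> y = Lb) \<or> (x = y \<and> lex_less xs ys))"

definition lex_le :: "word \<Rightarrow> word \<Rightarrow> bool" where
  "lex_le x y \<longleftrightarrow> lex_less x y \<or> x = y"

fun nyldon_upto :: "nat \<Rightarrow> word set" where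
  "nyldon_upto 0 = {}"
| "nyldon_upto (Suc n) = nyldon_upto n \<union>
     {w. length w = Suc n \<and>
         (length w = 1 \<or>
          \<not> (\<exists>gs. length gs \<ge> 2 \<and> concat gs = w \<and>
                 (\<forall>g\<in>set gs. g \<noteq> [] \<and> g \<in> nyldon_upto n) \<and>
                 (\<forall>i. Suc i < length gs \<longrightarrow> lex_le (gs ! i) (gs ! Suc i))))}"

definition nyldon :: "word \<Rightarrow> bool" where
  "nyldon w \<longleftrightarrow> w \<in> nyldon_upto (length w)"

fun compl :: "letter \<Rightarrow> letter" where
  "compl La = Lb" | "compl Lb = La"

definition bar :: "word \<Rightarrow> word" where
  "bar w = map compl w"

primrec TM :: "nat \<Rightarrow> word" where
  "TM 0 = [La]"
| "TM (Suc k) = TM k @ bar (TM k)"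

abbreviation prm :: "word \<Rightarrow> word" where
  "prm w \<equiv> butlast w"

definition t :: "nat \<Rightarrow> nat \<Rightarrow> word" where
  "t l k = (let A = TM (2*k); B = bar (TM (2*k)) in
     if l = 1 then [Lb] @ A @ prm B
     else if l = 2 then [Lb] @ A @ B
     else if l = 3 then [Lb] @ A @ B @ prm B
     else if l = 4 then [Lb] @ A
     else if l = 5 then [Lb] @ A @ TM (2*k - 1) @ prm (bar (TM (2*k - 2)))
     else if l = 6 then [Lb] @ A @ A @ prm B
     else if l = 7 then [Lb] @ A @ A @ B
     else if l = 8 then [Lb] @ A @ A @ B @ prm B
     else if l = 9 then [Lb] @ A @ B @ A @ A @ prm B
     else if l = 10 then [Lb] @ A @ B @ A @ A @ B
     else if l = 11 then [Lb] @ A @ A @ B @ B @ A @ A @ prm B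
     else [Lb] @ A @ B @ A @ A @ B @ B @ A @ A @ prm B)"

end

theory Submission imports Defs begin

(* Two facts about Nyldon words drive the proof. (1) A proper Nyldon suffix s of a Nyldon word w
   satisfies s < w. (2) If u and v are Nyldon, v < u, and every proper Nyldon suffix of u is
   <= v, then uv is Nyldon and every proper Nyldon suffix of uv is <= v. Fact (1) is proved by
   induction on the length, simultaneously with the correctness of the right-to-left factorization
   algorithm: prepend a letter to a nondecreasing Nyldon factorization of the tail and let it absorb
   the following factors while they are smaller. If w is Nyldon, the letter absorbs everything, so
   the last factor of the tail, which contains s as a suffix and so dominates it, is smaller than w.
   For the theorem, TM(2k+2) = A B B A with A = TM(2k) and B its complement, so every t_l(k+1) is a
   product of two words t_i(k) or t_i(k+1) to which (2) applies; the comparisons it requires are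
   decided by the first letters a of A and b of B. For k = 1 the algorithm is run on the twelve
   concrete words. *)

section \<open>Lexicographic order\<close>

lemma lex_less_irrefl [simp]: "\<not> lex_less x x"
  by (induction x) auto

lemma lex_less_trans: "lex_less x y \<Longrightarrow> lex_less y z \<Longrightarrow> lex_less x z"
proof (induction x y arbitrary: z rule: lex_less.induct)
  case (4 a x b y)
  then obtain c z' where "z = c # z'" by (cases z) auto
  with 4 show ?case by (cases a; cases b; cases c) auto
qed (auto elim: lex_less.elims)

lemma lex_less_linear: "lex_less x y \<or> x = y \<or> lex_less y x"
proof (induction x y rule: lex_less.induct)
  case (4 a x b y)
  then show ?case by (cases a; cases b) auto
qed auto

lemma lex_less_Nil_left [simp]: "lex_less [] y \<longleftrightarrow> y \<noteq> []"
  by (cases y) auto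

lemma lex_less_append_self_iff [simp]: "lex_less x (x @ y) \<longleftrightarrow> y \<noteq> []"
  by (induction x) auto

lemma lex_less_append_left_iff [simp]: "lex_less (c @ x) (c @ y) \<longleftrightarrow> lex_less x y"
  by (induction c) auto

lemma lex_less_append_rightI: "lex_less z p \<Longrightarrow> lex_less z (p @ q)"
  by (induction z p rule: lex_less.induct) auto

lemma lex_le_refl [simp]: "lex_le x x"
  by (simp add: lex_le_def)

lemma lex_le_trans: "lex_le x y \<Longrightarrow> lex_le y z \<Longrightarrow> lex_le x z"
  unfolding lex_le_def using lex_less_trans by blast

lemma lex_le_less_trans: "lex_le x y \<Longrightarrow> lex_less y z \<Longrightarrow> lex_less x z"
  unfolding lex_le_def using lex_less_trans by blast

lemma lex_less_le_trans: "lex_less x y \<Longrightarrow> lex_le y z \<Longrightarrow> lex_less x z"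
  unfolding lex_le_def using lex_less_trans by blast

lemma not_lex_less_iff: "\<not> lex_less x y \<longleftrightarrow> lex_le y x"
  unfolding lex_le_def using lex_less_linear lex_less_trans lex_less_irrefl by blast

lemma transp_lex_le: "transp lex_le"
  using lex_le_trans by (blast intro: transpI)

section \<open>Nondecreasing factorizations into Nyldon words\<close>

definition nyldon_fact :: "word list \<Rightarrow> word \<Rightarrow> bool" where
  "nyldon_fact gs w \<longleftrightarrow> concat gs = w \<and> (\<forall>g\<in>set gs. nyldon g) \<and> successively lex_le gs"

lemma nyldon_upto_iff: "w \<in> nyldon_upto n \<longleftrightarrow> w \<noteq> [] \<and> length w \<le> n \<and> nyldon w"
proof (induction n)
  case (Suc n)
  show ?case
  proof (cases "length w = Suc n")
    case True
    then show ?thesis by (auto simp: nyldon_def)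
  next
    case False
    then have "w \<in> nyldon_upto (Suc n) \<longleftrightarrow> w \<in> nyldon_upto n" by auto
    then show ?thesis using Suc False by auto
  qed
qed (simp add: nyldon_def)

lemma nyldon_not_Nil: "nyldon w \<Longrightarrow> w \<noteq> []"
  using nyldon_upto_iff nyldon_def by blast

lemma length_less_length_concat:
  assumes "2 \<le> length gs" "\<forall>h\<in>set gs. h \<noteq> []" "g \<in> set gs"
  shows "length g < length (concat gs)"
proof -
  obtain as bs where gs: "gs = as @ g # bs"
    using assms(3) by (meson split_list)
  then obtain h where "h \<in> set (as @ bs)"
    using assms(1) by (cases "as @ bs") auto
  then have "concat (as @ bs) \<noteq> []"
    using assms(2) gs by auto
  then show ?thesis
    using gs by simp
qed

lemma nyldon_iff_no_fact:
  "nyldon w \<longleftrightarrow> w \<noteq> [] \<and> \<not> (\<exists>gs. 2 \<le> length gs \<and> nyldon_fact gs w)"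
proof (cases "length w")
  case 0
  then show ?thesis using nyldon_not_Nil by auto
next
  case (Suc n)
  have factors_nyldon: "(\<forall>g\<in>set gs. g \<noteq> [] \<and> g \<in> nyldon_upto n) \<longleftrightarrow> (\<forall>g\<in>set gs. nyldon g)"
    if "2 \<le> length gs" "concat gs = w" for gs
  proof
    assume nyl: "\<forall>g\<in>set gs. nyldon g"
    then have "\<forall>g\<in>set gs. g \<noteq> []" using nyldon_not_Nil by blast
    with nyl length_less_length_concat[OF that(1)] that(2) Suc
    show "\<forall>g\<in>set gs. g \<noteq> [] \<and> g \<in> nyldon_upto n"
      by (auto simp: nyldon_upto_iff less_Suc_eq_le)
  qed (auto simp: nyldon_upto_iff)
  have no_fact_of_letter: "\<not> (2 \<le> length gs \<and> nyldon_fact gs w)" if "n = 0" for gs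
  proof
    assume "2 \<le> length gs \<and> nyldon_fact gs w"
    moreover from this have "hd gs \<in> set gs" by (cases gs) auto
    ultimately show False
      using length_less_length_concat[of gs "hd gs"] that Suc
      by (auto simp: nyldon_fact_def dest: nyldon_not_Nil)
  qed
  have "nyldon w \<longleftrightarrow> n = 0 \<or> \<not> (\<exists>gs. 2 \<le> length gs \<and> concat gs = w \<and>
          (\<forall>g\<in>set gs. g \<noteq> [] \<and> g \<in> nyldon_upto n) \<and> successively lex_le gs)"
    using Suc nyldon_upto_iff[of w n]
    by (simp add: nyldon_def successively_conv_sorted_wrt[OF transp_lex_le]
        sorted_wrt_iff_nth_Suc_transp[OF transp_lex_le])
  also have "\<dots> \<longleftrightarrow> \<not> (\<exists>gs. 2 \<le> length gs \<and> nyldon_fact gs w)"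
    using factors_nyldon no_fact_of_letter unfolding nyldon_fact_def by blast
  finally show ?thesis using Suc by auto
qed

lemma nyldon_letter: "nyldon [c]"
  by (simp add: nyldon_def)

lemma nyldon_fact_single: "nyldon w \<Longrightarrow> nyldon_fact [w] w"
  by (simp add: nyldon_fact_def)

lemma nyldon_fact_Cons_iff:
  "nyldon_fact (g # gs) w \<longleftrightarrow>
     nyldon g \<and> nyldon_fact gs (concat gs) \<and> w = g @ concat gs \<and> (gs \<noteq> [] \<longrightarrow> lex_le g (hd gs))"
  by (auto simp: nyldon_fact_def successively_Cons)

lemma nyldon_fact_append_iff:
  "nyldon_fact (as @ bs) w \<longleftrightarrow>
     nyldon_fact as (concat as) \<and> nyldon_fact bs (concat bs) \<and> w = concat as @ concat bs \<and>
     (as \<noteq> [] \<longrightarrow> bs \<noteq> [] \<longrightarrow> lex_le (last as) (hd bs))"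
  by (auto simp: nyldon_fact_def successively_append_iff)

lemma nyldon_fact_last: "nyldon_fact gs w \<Longrightarrow> gs \<noteq> [] \<Longrightarrow> nyldon (last gs)"
  by (simp add: nyldon_fact_def)

lemma nyldon_fact_not_Nil: "nyldon_fact gs w \<Longrightarrow> w \<noteq> [] \<Longrightarrow> gs \<noteq> []"
  by (auto simp: nyldon_fact_def)

lemma exists_nyldon_fact: "\<exists>gs. nyldon_fact gs w"
proof (induction "length w" arbitrary: w rule: less_induct)
  case less
  consider "w = []" | "nyldon w" | "\<exists>gs. 2 \<le> length gs \<and> nyldon_fact gs w"
    using nyldon_iff_no_fact by blast
  then show ?case
    by cases (auto simp: nyldon_fact_def intro: exI[of _ "[]"] exI[of _ "[w]"])
qed

lemma concat_butlast_last: "xs \<noteq> [] \<Longrightarrow> concat (butlast xs) @ last xs = concat xs"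
  by (metis append_butlast_last_id concat.simps concat_append self_append_conv)

lemma exists_nyldon_fact_last_suffix:
  assumes "z \<noteq> []"
  obtains hs p where "nyldon_fact hs z" "hs \<noteq> []" "z = p @ last hs"
proof -
  obtain hs where hs: "nyldon_fact hs z"
    using exists_nyldon_fact by blast
  then have "hs \<noteq> []"
    using assms by (rule nyldon_fact_not_Nil)
  moreover from this have "z = concat (butlast hs) @ last hs"
    using hs by (simp add: concat_butlast_last nyldon_fact_def)
  ultimately show thesis
    using that hs by blast
qed

lemma not_nyldon_if_fact: "nyldon_fact gs w \<Longrightarrow> 2 \<le> length gs \<Longrightarrow> \<not> nyldon w"
  using nyldon_iff_no_fact by blast

lemma nyldon_fact_of_nyldon:
  assumes "nyldon w" "nyldon_fact gs w"
  shows "gs = [w]"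
proof -
  have "gs \<noteq> []" "\<not> 2 \<le> length gs"
    using assms nyldon_fact_not_Nil nyldon_not_Nil not_nyldon_if_fact by blast+
  then obtain g where "gs = [g]"
    by (cases gs) (auto simp: Suc_le_eq)
  then show ?thesis
    using assms(2) by (simp add: nyldon_fact_def)
qed

lemma not_nyldon_append_if_facts:
  assumes "nyldon_fact hs z" "nyldon_fact bs y" "hs \<noteq> []" "bs \<noteq> []" "lex_le (last hs) (hd bs)"
  shows "\<not> nyldon (z @ y)"
proof -
  have "2 \<le> length (hs @ bs)"
    using assms(3,4) by (cases hs; cases bs) auto
  moreover have "z = concat hs" "y = concat bs"
    using assms(1,2) by (simp_all add: nyldon_fact_def)
  with assms have "nyldon_fact (hs @ bs) (z @ y)"
    by (simp add: nyldon_fact_append_iff)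
  ultimately show ?thesis
    using not_nyldon_if_fact by blast
qed

section \<open>Proper Nyldon suffixes\<close>

definition nyldon_suffixes_le :: "word \<Rightarrow> word \<Rightarrow> bool" where
  "nyldon_suffixes_le w \<tau> \<longleftrightarrow> (\<forall>p s. w = p @ s \<longrightarrow> p \<noteq> [] \<longrightarrow> nyldon s \<longrightarrow> lex_le s \<tau>)"

lemma nyldon_suffixes_le_letter: "nyldon_suffixes_le [c] \<tau>"
  by (auto simp: nyldon_suffixes_le_def Cons_eq_append_conv dest: nyldon_not_Nil)

lemma nyldon_suffixes_le_mono: "nyldon_suffixes_le w \<tau> \<Longrightarrow> lex_le \<tau> \<tau>' \<Longrightarrow> nyldon_suffixes_le w \<tau>'"
  unfolding nyldon_suffixes_le_def using lex_le_trans by blast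

(* Fact (1) for words shorter than n; it is proved by induction on n together with the
   correctness of merge_into, which depends on it for shorter words. *)
definition nyldon_suffix_less_below :: "nat \<Rightarrow> bool" where
  "nyldon_suffix_less_below n \<longleftrightarrow>
     (\<forall>w p s. length w < n \<longrightarrow> nyldon w \<longrightarrow> w = p @ s \<longrightarrow> p \<noteq> [] \<longrightarrow> nyldon s \<longrightarrow> lex_less s w)"

lemma nyldon_suffix_less_belowD:
  "nyldon_suffix_less_below n \<Longrightarrow> length w < n \<Longrightarrow> nyldon w \<Longrightarrow> w = p @ s \<Longrightarrow> p \<noteq> [] \<Longrightarrow> nyldon s
    \<Longrightarrow> lex_less s w"
  unfolding nyldon_suffix_less_below_def by blast

lemma concat_split:
  assumes "concat gs = u @ v" "u \<noteq> []"
  obtains as g bs x y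
  where "gs = as @ g # bs" "g = x @ y" "u = concat as @ x" "v = y @ concat bs" "x \<noteq> []"
  using assms
proof (induction gs arbitrary: u thesis)
  case (Cons g gs)
  from Cons.prems(2) obtain r where "g = u @ r \<and> r @ concat gs = v \<or> g @ r = u \<and> concat gs = r @ v"
    by (auto simp: append_eq_append_conv2)
  then show ?case
  proof (elim disjE conjE)
    assume "g = u @ r" "r @ concat gs = v"
    then show ?thesis
      using Cons.prems(1)[of "[]" g gs u r] Cons.prems(3) by simp
  next
    assume u: "g @ r = u" and gs: "concat gs = r @ v"
    show ?thesis
    proof (cases "r = []")
      case True
      then show ?thesis
        using Cons.prems(1)[of "[]" g gs u "[]"] Cons.prems(3) u gs by simp
    next
      case False
      obtain as g' bs x y where "gs = as @ g' # bs" "g' = x @ y" "r = concat as @ x" "v = y @ concat bs" "x \<noteq> []"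
        using Cons.IH[OF _ gs False] by blast
      then show ?thesis
        using Cons.prems(1)[of "g # as" g' bs x y] u by simp
    qed
  qed
qed simp

(* Cut a factorization of uv into at least two factors at the end of u: each case yields a
   forbidden factorization of u, of v, or of the factor straddling the cut. *)
lemma nyldon_append_below:
  assumes below: "nyldon_suffix_less_below n" and len: "length (u @ v) \<le> n"
    and u: "nyldon u" and v: "nyldon v" and vu: "lex_less v u" and suf: "nyldon_suffixes_le u v"
  shows "nyldon (u @ v)"
proof -
  have False if fact: "nyldon_fact gs (u @ v)" and two: "2 \<le> length gs" for gs
  proof -
    have concat: "concat gs = u @ v" and nonempty: "\<forall>h\<in>set gs. h \<noteq> []"
      using fact by (auto simp: nyldon_fact_def dest: nyldon_not_Nil)
    from concat obtain as g bs x y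
      where split: "gs = as @ g # bs" "g = x @ y" "u = concat as @ x" "v = y @ concat bs" "x \<noteq> []"
      using nyldon_not_Nil[OF u] by (rule concat_split)
    have as: "nyldon_fact as (concat as)" and bs: "nyldon_fact bs (concat bs)" and g: "nyldon g"
      and as_g: "as \<noteq> [] \<Longrightarrow> lex_le (last as) g" and g_bs: "bs \<noteq> [] \<Longrightarrow> lex_le g (hd bs)"
      using fact unfolding split(1) by (auto simp: nyldon_fact_append_iff nyldon_fact_Cons_iff)
    have "length g < length (concat gs)"
      using length_less_length_concat[OF two nonempty] split(1) by simp
    with len concat have g_short: "length g < n" by simp
    consider (u_product) "y = []" "as \<noteq> []" | (u_factor) "y = []" "as = []"
      | (straddle_inner) "y \<noteq> []" "bs \<noteq> []" | (straddle_last) "y \<noteq> []" "bs = []"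
      by blast
    then show False
    proof cases
      case u_product
      then have "\<not> nyldon (concat as @ g)"
        using not_nyldon_append_if_facts[OF as nyldon_fact_single[OF g]] as_g by simp
      then show False
        using u split u_product by simp
    next
      case u_factor
      then have "u = g" "v = concat bs" "2 \<le> length (g # bs)"
        using split two by auto
      then obtain h where "bs = [h]"
        using not_nyldon_if_fact[OF bs] v by (cases bs rule: remdups_adj.cases) auto
      then show False
        using \<open>u = g\<close> \<open>v = concat bs\<close> g_bs vu by (simp add: not_lex_less_iff[symmetric])
    next
      case straddle_inner
      obtain hs p where hs: "nyldon_fact hs y" "hs \<noteq> []" "y = p @ last hs"
        using exists_nyldon_fact_last_suffix[OF straddle_inner(1)] by blast
      have "lex_less (last hs) g"
        using nyldon_suffix_less_belowD[OF below g_short g, of "x @ p" "last hs"]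
          nyldon_fact_last[OF hs(1,2)] split(2,5) hs(3) by simp
      then have "\<not> nyldon (y @ concat bs)"
        using not_nyldon_append_if_facts[OF hs(1) bs hs(2) straddle_inner(2)] g_bs[OF straddle_inner(2)]
        by (simp add: lex_less_le_trans lex_le_def)
      then show False
        using v split by simp
    next
      case straddle_last
      obtain hs p where hs: "nyldon_fact hs x" "hs \<noteq> []" "x = p @ last hs"
        using exists_nyldon_fact_last_suffix[OF split(5)] by blast
      have "as \<noteq> []" "\<forall>h\<in>set as. h \<noteq> []"
        using straddle_last two split(1) nonempty by auto
      then have "concat as @ p \<noteq> []"
        by (cases as) auto
      then have "lex_le (last hs) v"
        using suf nyldon_fact_last[OF hs(1,2)] split(3) hs(3) unfolding nyldon_suffixes_le_def by simp
      then have "\<not> nyldon (x @ v)"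
        using not_nyldon_append_if_facts[OF hs(1) nyldon_fact_single[OF v] hs(2)] by simp
      then show False
        using g split straddle_last by simp
    qed
  qed
  then show ?thesis
    using nyldon_iff_no_fact nyldon_not_Nil[OF u] by blast
qed

lemma nyldon_append_suffixes_le_below:
  assumes below: "nyldon_suffix_less_below n" and len: "length (u @ v) \<le> n"
    and u: "nyldon u \<and> nyldon_suffixes_le u \<tau>" and v: "nyldon v" and vu: "lex_less v u" and "lex_le \<tau> v"
  shows "nyldon (u @ v) \<and> nyldon_suffixes_le (u @ v) v"
proof
  have suf: "nyldon_suffixes_le u v"
    using u \<open>lex_le \<tau> v\<close> nyldon_suffixes_le_mono by blast
  then show "nyldon (u @ v)"
    using nyldon_append_below[OF below len _ v vu] u by blast
  have "lex_le s v" if split: "u @ v = p @ s" and "p \<noteq> []" and s: "nyldon s" for p s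
  proof -
    from split obtain r where "u = p @ r \<and> s = r @ v \<or> p = u @ r \<and> v = r @ s"
      by (auto simp: append_eq_append_conv2)
    then show ?thesis
    proof (elim disjE conjE)
      assume r: "u = p @ r" "s = r @ v"
      show ?thesis
      proof (rule ccontr)
        assume "\<not> lex_le s v"
        then have "r \<noteq> []"
          using r by auto
        then obtain hs q where hs: "nyldon_fact hs r" "hs \<noteq> []" "r = q @ last hs"
          by (rule exists_nyldon_fact_last_suffix)
        have "lex_le (last hs) v"
          using suf nyldon_fact_last[OF hs(1,2)] r(1) hs(3) \<open>p \<noteq> []\<close>
          unfolding nyldon_suffixes_le_def by simp
        then have "\<not> nyldon (r @ v)"
          using not_nyldon_append_if_facts[OF hs(1) nyldon_fact_single[OF v] hs(2)] by simp
        then show False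
          using r s by simp
      qed
    next
      assume r: "p = u @ r" "v = r @ s"
      show ?thesis
      proof (cases "r = []")
        case False
        have "length v < n"
          using len nyldon_not_Nil[OF conjunct1[OF u]] by (cases u) auto
        then show ?thesis
          using nyldon_suffix_less_belowD[OF below _ v r(2) False s] by (simp add: lex_le_def)
      qed (use r in simp)
    qed
  qed
  then show "nyldon_suffixes_le (u @ v) v"
    by (simp add: nyldon_suffixes_le_def)
qed

section \<open>Right-to-left factorization\<close>

fun merge_into :: "word \<Rightarrow> word list \<Rightarrow> word list" where
  "merge_into p [] = [p]"
| "merge_into p (e # es) = (if lex_less e p then merge_into (p @ e) es else p # e # es)"

lemma merge_into_fact_below:
  assumes below: "nyldon_suffix_less_below n"
    and "length (p @ w) \<le> n" "nyldon_fact es w" "nyldon p \<and> nyldon_suffixes_le p \<tau>"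
    and "es \<noteq> [] \<Longrightarrow> lex_le \<tau> (hd es)"
  shows "nyldon_fact (merge_into p es) (p @ w) \<and>
    (merge_into p es = [p @ w] \<longrightarrow> es \<noteq> [] \<longrightarrow> nyldon_suffixes_le (p @ w) (last es))"
  using assms(2-)
proof (induction p es arbitrary: w \<tau> rule: merge_into.induct)
  case (1 p)
  then show ?case
    by (simp add: nyldon_fact_def)
next
  case (2 p e es)
  from "2.prems"(2) have e: "nyldon e" and es: "nyldon_fact es (concat es)" and w: "w = e @ concat es"
    and e_es: "es \<noteq> [] \<Longrightarrow> lex_le e (hd es)"
    by (simp_all add: nyldon_fact_Cons_iff)
  show ?case
  proof (cases "lex_less e p")
    case True
    have "lex_le \<tau> e"
      using "2.prems"(4) by simp
    then have pe: "nyldon (p @ e) \<and> nyldon_suffixes_le (p @ e) e"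
      using nyldon_append_suffixes_le_below[OF below _ "2.prems"(3) e True] "2.prems"(1) w
      by simp
    show ?thesis
      using "2.IH"[OF True _ es pe e_es] "2.prems"(1) True pe w by (cases es) auto
  next
    case False
    then have "nyldon_fact ([p] @ e # es) (p @ w)"
      using "2.prems" by (simp add: nyldon_fact_append_iff nyldon_fact_def not_lex_less_iff)
    with False show ?thesis
      by simp
  qed
qed

lemma merge_into_not_Nil [simp]: "merge_into p es \<noteq> []"
  by (induction p es rule: merge_into.induct) auto

lemma last_merge_into:
  "es \<noteq> [] \<Longrightarrow> last (merge_into p es) = last es \<or> merge_into p es = [p @ concat es]"
  by (induction p es rule: merge_into.induct) auto

lemma merge_into_single_lex_less:
  "merge_into p es = [w] \<Longrightarrow> es \<noteq> [] \<Longrightarrow> lex_less (last es) (p @ concat (butlast es))"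
proof (induction p es rule: merge_into.induct)
  case (2 p e es)
  then show ?case
    by (cases es) (auto split: if_splits)
qed simp

lemma exists_nyldon_fact_last_suffix_below:
  assumes below: "nyldon_suffix_less_below n" and s: "nyldon s" and "length (q @ s) < n"
  shows "\<exists>es. nyldon_fact es (q @ s) \<and> es \<noteq> [] \<and> (\<exists>y. last es = y @ s)"
  using assms(3)
proof (induction q)
  case Nil
  then show ?case
    using s nyldon_fact_single by fastforce
next
  case (Cons x q)
  then obtain es y where es: "nyldon_fact es (q @ s)" "es \<noteq> []" "last es = y @ s"
    by auto
  have "nyldon_fact (merge_into [x] es) (x # q @ s)"
    using merge_into_fact_below[OF below _ es(1), of "[x]" "hd es"] Cons.prems
    by (simp add: nyldon_letter nyldon_suffixes_le_letter)
  moreover have "\<exists>y. last (merge_into [x] es) = y @ s"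
    using last_merge_into[OF es(2), of "[x]"] es by (auto simp: nyldon_fact_def)
  ultimately show ?case
    using merge_into_not_Nil by (metis append_Cons)
qed

lemma nyldon_suffix_less_below_Suc:
  assumes below: "nyldon_suffix_less_below n"
  shows "nyldon_suffix_less_below (Suc n)"
  unfolding nyldon_suffix_less_below_def
proof (intro allI impI)
  fix w p s
  assume len: "length w < Suc n" and w: "nyldon w" and split: "w = p @ s" and "p \<noteq> []" and s: "nyldon s"
  then obtain x p' where p: "p = x # p'"
    by (cases p) auto
  obtain es y where es: "nyldon_fact es (p' @ s)" "es \<noteq> []" "last es = y @ s"
    using exists_nyldon_fact_last_suffix_below[OF below s, of p'] len split p by auto
  have "nyldon_fact (merge_into [x] es) w"
    using merge_into_fact_below[OF below _ es(1), of "[x]" "hd es"] len split p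
    by (simp add: nyldon_letter nyldon_suffixes_le_letter)
  then have "merge_into [x] es = [w]"
    using nyldon_fact_of_nyldon[OF w] by blast
  then have "lex_less (last es) (x # concat (butlast es))"
    using merge_into_single_lex_less[OF _ es(2)] by fastforce
  moreover have w_split: "w = (x # concat (butlast es)) @ last es"
    using es(1,2) split p by (simp add: nyldon_fact_def concat_butlast_last)
  ultimately have "lex_less (last es) w"
    by (metis lex_less_append_rightI)
  moreover have "lex_le s (last es)"
  proof (cases "y = []")
    case False
    have "length (last es) < n"
      using w_split len by simp
    then show ?thesis
      using nyldon_suffix_less_belowD[OF below _ _ es(3) False s] nyldon_fact_last[OF es(1,2)]
      by (simp add: lex_le_def)
  qed (use es in simp)
  ultimately show "lex_less s w"
    by (rule lex_le_less_trans[rotated])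
qed

lemma nyldon_suffix_less_below_all: "nyldon_suffix_less_below n"
proof (induction n)
  case 0
  then show ?case by (simp add: nyldon_suffix_less_below_def)
qed (rule nyldon_suffix_less_below_Suc)

lemma nyldon_append_suffixes_le:
  "nyldon u \<and> nyldon_suffixes_le u \<tau> \<Longrightarrow> nyldon v \<Longrightarrow> lex_less v u \<Longrightarrow> lex_le \<tau> v \<Longrightarrow>
    nyldon (u @ v) \<and> nyldon_suffixes_le (u @ v) v"
  by (rule nyldon_append_suffixes_le_below[OF nyldon_suffix_less_below_all order_refl])

primrec nyldon_factorize :: "word \<Rightarrow> word list" where
  "nyldon_factorize [] = []"
| "nyldon_factorize (x # w) = merge_into [x] (nyldon_factorize w)"

lemma merge_into_letter_fact:
  assumes "nyldon_fact es w"
  shows "nyldon_fact (merge_into [x] es) (x # w) \<and>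
    (merge_into [x] es = [x # w] \<longrightarrow> es \<noteq> [] \<longrightarrow> nyldon_suffixes_le (x # w) (last es))"
  using merge_into_fact_below[OF nyldon_suffix_less_below_all order_refl assms, of "[x]" "hd es"]
  by (simp add: nyldon_letter nyldon_suffixes_le_letter)

lemma nyldon_fact_factorize: "nyldon_fact (nyldon_factorize w) w"
proof (induction w)
  case Nil
  then show ?case by (simp add: nyldon_fact_def)
next
  case (Cons x w)
  then show ?case
    using merge_into_letter_fact[OF Cons.IH] by (simp only: nyldon_factorize.simps)
qed

lemma nyldon_iff_factorize: "nyldon w \<longleftrightarrow> nyldon_factorize w = [w]"
proof
  show "nyldon_factorize w = [w] \<Longrightarrow> nyldon w"
    using nyldon_fact_factorize[of w] by (simp add: nyldon_fact_def)
qed (rule nyldon_fact_of_nyldon[OF _ nyldon_fact_factorize])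

lemma nyldon_suffixes_le_factorize:
  assumes "nyldon_factorize (x # w) = [x # w]" and "w \<noteq> []"
  shows "nyldon_suffixes_le (x # w) (last (nyldon_factorize w))"
  using merge_into_letter_fact[OF nyldon_fact_factorize[of w], of x] assms
    nyldon_fact_not_Nil[OF nyldon_fact_factorize]
  by simp

section \<open>Thue--Morse words\<close>

lemma bar_Nil [simp]: "bar [] = []"
  by (simp add: bar_def)

lemma bar_Cons [simp]: "bar (c # x) = compl c # bar x"
  by (simp add: bar_def)

lemma bar_append [simp]: "bar (x @ y) = bar x @ bar y"
  by (simp add: bar_def)

lemma TM_Cons: "\<exists>r. TM n = La # r"
  by (induction n) auto

lemma TM_even_snoc: "\<exists>r. TM (2 * k) = r @ [La]"
proof (induction k)
  case (Suc k)
  then show ?case by auto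
qed simp

lemma bar_bar [simp]: "bar (bar x) = x"
proof -
  have "compl (compl c) = c" for c
    by (cases c) simp_all
  then show ?thesis
    by (simp add: bar_def comp_def)
qed

lemma TM_even_Suc: "TM (2 * Suc k) = TM (2 * k) @ bar (TM (2 * k)) @ bar (TM (2 * k)) @ TM (2 * k)"
  by simp

lemma TM_even_Suc_Cons_snoc: "\<exists>M. TM (2 * Suc k) = La # M @ [La]"
proof -
  obtain r r' where r: "TM (2 * k) = La # r" and r': "TM (2 * k) = r' @ [La]"
    using TM_Cons TM_even_snoc by blast
  have "TM (2 * Suc k) = (La # r) @ bar (TM (2 * k)) @ bar (TM (2 * k)) @ (r' @ [La])"
    unfolding TM_even_Suc by (simp only: r[symmetric] r'[symmetric])
  then show ?thesis
    by auto
qed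

(* With A = TM(2k) and B = bar A: TM(2k+2) = A B B A, TM(2k+1) = A B, and B = B' b
   because A ends with a. *)
lemma t_Suc:
  "t 1 (Suc k) = t 3 k @ t 9 k" "t 2 (Suc k) = t 3 k @ t 10 k" "t 3 (Suc k) = t 3 k @ t 12 k"
  "t 4 (Suc k) = t 3 k @ t 4 k" "t 5 (Suc k) = t 3 k @ t 8 k"
  "t 6 (Suc k) = t 5 (Suc k) @ t 9 k" "t 7 (Suc k) = t 5 (Suc k) @ t 10 k"
  "t 8 (Suc k) = t 5 (Suc k) @ t 12 k"
  "t 9 (Suc k) = t 1 (Suc k) @ t 6 (Suc k)" "t 10 (Suc k) = t 1 (Suc k) @ t 7 (Suc k)"
  "t 11 (Suc k) = t 8 (Suc k) @ t 6 (Suc k)" "t 12 (Suc k) = t 1 (Suc k) @ t 11 (Suc k)"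
  using TM_even_snoc[of k] by (auto simp: t_def butlast_append)

lemma t_Suc_nyldon:
  assumes "1 \<le> k" and nyldon_k: "\<forall>l\<in>{1..12}. nyldon (t l k)" and "nyldon_suffixes_le (t 3 k) (t 4 k)"
  shows "(\<forall>l\<in>{1..12}. nyldon (t l (Suc k))) \<and> nyldon_suffixes_le (t 3 (Suc k)) (t 4 (Suc k))"
proof -
  obtain M where "TM (2 * k) = La # M @ [La]"
    using TM_even_Suc_Cons_snoc \<open>1 \<le> k\<close> by (cases k) auto
  note explicit = t_def \<open>TM (2 * k) = La # M @ [La]\<close> butlast_append lex_le_def
  have n: "nyldon (t l k)" if "l \<in> {1..12}" for l
    using nyldon_k that by blast
  have t3: "nyldon (t 3 k) \<and> nyldon_suffixes_le (t 3 k) (t 4 k)"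
    using n assms(3) by simp
  have l1: "nyldon (t 1 (Suc k)) \<and> nyldon_suffixes_le (t 1 (Suc k)) (t 9 k)"
    unfolding t_Suc(1) by (rule nyldon_append_suffixes_le[OF t3 n]) (simp_all add: explicit)
  have l2: "nyldon (t 2 (Suc k)) \<and> nyldon_suffixes_le (t 2 (Suc k)) (t 10 k)"
    unfolding t_Suc(2) by (rule nyldon_append_suffixes_le[OF t3 n]) (simp_all add: explicit)
  have l3: "nyldon (t 3 (Suc k)) \<and> nyldon_suffixes_le (t 3 (Suc k)) (t 12 k)"
    unfolding t_Suc(3) by (rule nyldon_append_suffixes_le[OF t3 n]) (simp_all add: explicit)
  have l4: "nyldon (t 4 (Suc k)) \<and> nyldon_suffixes_le (t 4 (Suc k)) (t 4 k)"
    unfolding t_Suc(4) by (rule nyldon_append_suffixes_le[OF t3 n]) (simp_all add: explicit)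
  have l5: "nyldon (t 5 (Suc k)) \<and> nyldon_suffixes_le (t 5 (Suc k)) (t 8 k)"
    unfolding t_Suc(5) by (rule nyldon_append_suffixes_le[OF t3 n]) (simp_all add: explicit)
  have l6: "nyldon (t 6 (Suc k)) \<and> nyldon_suffixes_le (t 6 (Suc k)) (t 9 k)"
    unfolding t_Suc(6) by (rule nyldon_append_suffixes_le[OF l5 n]) (simp_all add: explicit)
  have l7: "nyldon (t 7 (Suc k)) \<and> nyldon_suffixes_le (t 7 (Suc k)) (t 10 k)"
    unfolding t_Suc(7) by (rule nyldon_append_suffixes_le[OF l5 n]) (simp_all add: explicit)
  have l8: "nyldon (t 8 (Suc k)) \<and> nyldon_suffixes_le (t 8 (Suc k)) (t 12 k)"
    unfolding t_Suc(8) by (rule nyldon_append_suffixes_le[OF l5 n]) (simp_all add: explicit)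
  have l9: "nyldon (t 9 (Suc k))"
    unfolding t_Suc(9) by (rule conjunct1, rule nyldon_append_suffixes_le[OF l1 conjunct1[OF l6]])
      (simp_all add: explicit)
  have l10: "nyldon (t 10 (Suc k))"
    unfolding t_Suc(10) by (rule conjunct1, rule nyldon_append_suffixes_le[OF l1 conjunct1[OF l7]])
      (simp_all add: explicit)
  have l11: "nyldon (t 11 (Suc k)) \<and> nyldon_suffixes_le (t 11 (Suc k)) (t 6 (Suc k))"
    unfolding t_Suc(11) by (rule nyldon_append_suffixes_le[OF l8 conjunct1[OF l6]]) (simp_all add: explicit)
  have l12: "nyldon (t 12 (Suc k))"
    unfolding t_Suc(12) by (rule conjunct1, rule nyldon_append_suffixes_le[OF l1 conjunct1[OF l11]])
      (simp_all add: explicit)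
  have "l \<in> {1..12} \<Longrightarrow> nyldon (t l (Suc k))" for l
    using l1 l2 l3 l4 l5 l6 l7 l8 l9 l10 l11 l12 by (auto simp: numeral_eq_Suc le_Suc_eq)
  moreover have "lex_le (t 12 k) (t 4 (Suc k))"
    by (simp add: explicit)
  then have "nyldon_suffixes_le (t 3 (Suc k)) (t 4 (Suc k))"
    using l3 nyldon_suffixes_le_mono by blast
  ultimately show ?thesis
    by blast
qed

lemma TM_2: "TM 2 = [La, Lb, Lb, La]"
  by (simp add: numeral_2_eq_2)

lemma t_one_nyldon:
  assumes "l \<in> {1..12}"
  shows "nyldon (t l 1)"
proof -
  have "l = 1 \<or> l = 2 \<or> l = 3 \<or> l = 4 \<or> l = 5 \<or> l = 6 \<or> l = 7 \<or> l = 8 \<or> l = 9 \<or> l = 10 \<or> l = 11 \<or> l = 12"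
    using assms by simp presburger
  then show ?thesis
    by (elim disjE) (simp_all add: nyldon_iff_factorize t_def TM_2)
qed

lemma t_one_nyldon_suffixes_le: "nyldon_suffixes_le (t 3 1) (t 4 1)"
proof -
  have t3: "t 3 1 = Lb # [La, Lb, Lb, La, Lb, La, La, Lb, Lb, La, La]"
    by (simp add: t_def TM_2)
  have "nyldon_suffixes_le (t 3 1) (last (nyldon_factorize [La, Lb, Lb, La, Lb, La, La, Lb, Lb, La, La]))"
    unfolding t3 by (rule nyldon_suffixes_le_factorize) simp_all
  moreover have "lex_le (last (nyldon_factorize [La, Lb, Lb, La, Lb, La, La, Lb, Lb, La, La])) (t 4 1)"
    by (simp add: t_def TM_2 lex_le_def)
  ultimately show ?thesis
    using nyldon_suffixes_le_mono by blast
qed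

theorem lemma9:
  fixes k l :: nat
  assumes "k \<ge> 1" and "l \<in> {1..12}"
  shows "nyldon (t l k)"
proof -
  have "(\<forall>l\<in>{1..12}. nyldon (t l k)) \<and> nyldon_suffixes_le (t 3 k) (t 4 k)"
    using \<open>k \<ge> 1\<close>
  proof (induction k rule: nat_induct_at_least)
    case base
    then show ?case
      using t_one_nyldon t_one_nyldon_suffixes_le by blast
  next
    case (Suc k)
    then show ?case
      using t_Suc_nyldon by blast
  qed
  then show ?thesis
    using \<open>l \<in> {1..12}\<close> by blast
qed

end
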